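(* Let $(F,+,\cdot)$ be a (left) near-field, $I$ an index set, and $\boldsymbol\sigma=(\sigma_i)_{i\in I}$, $\boldsymbol\rho=(\rho_i)_{i\in I}$ families of multiplicative automorphisms of $F$. Define an equivalence relation $\approx$ on $I$ by $i\approx j$ iff there is $\gamma\in F\setminus\{0\}$ such that $\sigma_i\circ\rho_i\circ\varphi_\gamma\circ(\sigma_j\circ\rho_j)^{-1}$ is a near-field automorphism of $(F,+,\cdot)$. Let $\mathcal T$ be a full set of representatives for $\approx$, for $t\in\mathcal T$ let $I_t$ be the class of $t$, $\boldsymbol\sigma_t=(\sigma_i)_{i\in I_t}$, $\boldsymbol\rho_t=(\rho_i)_{i\in I_t}$, and let $\Psi_t:F^{\boldsymbol\sigma_t,\boldsymbol\rho_t}\to F^{\boldsymbol\sigma,\boldsymbol\rho}$ send $(\alpha_i)_{i\in I_t}$ to $(\beta_i)_{i\in I}$ with $\beta_i=\alpha_i$ for $i\in I_t$ and $\beta_i=0$ otherwise. Then $\{\Psi_t(F^{\boldsymbol\sigma_t,\boldsymbol\rho_t})\}_{t\in\mathcal T}$ is a regular decomposition family for $F^{\boldsymbol\sigma,\boldsymbol\rho}$.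
   Context: A (left) near-field is $(F,+,\cdot,0,1)$ where $(F,\cdot,1)$ is a monoid, $(F\setminus\{0\},\cdot)$ is a group, $(F,+,0)$ is an abelian group, and $\alpha(\beta+\gamma)=\alpha\beta+\alpha\gamma$. A multiplicative automorphism is a monoid automorphism of $(F,\cdot)$; a near-field automorphism preserves both $+$ and $\cdot$. For $\tau$ multiplicative, $\alpha+_\tau\beta=\tau^{-1}(\tau(\alpha)+\tau(\beta))$; $\varphi_\gamma(\alpha)=\gamma^{-1}\alpha\gamma$. For families $\boldsymbol\sigma=(\sigma_i)_{i\in J}$, $\boldsymbol\rho=(\rho_i)_{i\in J}$, $F^{\boldsymbol\sigma,\boldsymbol\rho}$ is the set of finitely supported $(\alpha_i)_{i\in J}\in F^J$ with addition $(\alpha_i)+_{\boldsymbol\sigma}(\beta_i)=(\alpha_i+_{\sigma_i}\beta_i)$ and scalar multiplication $\alpha\cdot_{\boldsymbol\rho}(\alpha_i)=(\rho_i(\alpha)\alpha_i)$; it is a near-vector space over $F$. For a near-vector space $V$: the quasi-kernel is $Q(V)=\{u:\forall\alpha,\beta\ \exists\gamma,\ \alpha u+\beta u=\gamma u\}$; a subspace is a nonempty subset closed under addition and scalar multiplication; $u,v\in Q(V)\setminus\{0\}$ are compatible if $u+\lambda v\in Q(V)$ for some $\lambda\in F\setminus\{0\}$; $V$ is regular if any two elements of $Q(V)\setminus\{0\}$ are compatible; a maximal regular subspace is a subspace that is regular (as a near-vector space) and maximal under inclusion among such. A family $\{V_i\}$ of subspaces of $V$ is a regular decomposition family if $V=\bigoplus_i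 V_i$ (internal direct sum) and each $V_i$ is a maximal regular subspace of $V$. *)

theory Defs
  imports Main
begin

definition near_field :: "('a \<Rightarrow> 'a \<Rightarrow> 'a) \<Rightarrow> ('a \<Rightarrow> 'a \<Rightarrow> 'a) \<Rightarrow> 'a \<Rightarrow> 'a \<Rightarrow> bool" where
  "near_field add mul zero one \<longleftrightarrow>
     (\<forall>a b c. add (add a b) c = add a (add b c)) \<and>
     (\<forall>a b. add a b = add b a) \<and>
     (\<forall>a. add zero a = a) \<and>
     (\<forall>a. \<exists>b. add a b = zero) \<and>
     (\<forall>a b c. mul (mul a b) c = mul a (mul b c)) \<and>
     (\<forall>a. mul one a = a \<and> mul a one = a) \<and>
     one \<noteq> zero \<and>
     (\<forall>a b. a \<noteq> zero \<longrightarrow> b \<noteq> zero \<longrightarrow> mul a b \<noteq> zero) \<and>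
     (\<forall>a. a \<noteq> zero \<longrightarrow> (\<exists>b. b \<noteq> zero \<and> mul a b = one \<and> mul b a = one)) \<and>
     (\<forall>a b c. mul a (add b c) = add (mul a b) (mul a c))"

definition mult_aut :: "('a \<Rightarrow> 'a \<Rightarrow> 'a) \<Rightarrow> 'a \<Rightarrow> ('a \<Rightarrow> 'a) \<Rightarrow> bool" where
  "mult_aut mul one \<tau> \<longleftrightarrow> bij \<tau> \<and> (\<forall>a b. \<tau> (mul a b) = mul (\<tau> a) (\<tau> b)) \<and> \<tau> one = one"

definition nf_aut :: "('a \<Rightarrow> 'a \<Rightarrow> 'a) \<Rightarrow> ('a \<Rightarrow> 'a \<Rightarrow> 'a) \<Rightarrow> ('a \<Rightarrow> 'a) \<Rightarrow> bool" where
  "nf_aut add mul \<tau> \<longleftrightarrow> bij \<tau> \<and> (\<forall>a b. \<tau> (add a b) = add (\<tau> a) (\<tau> b))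
                                \<and> (\<forall>a b. \<tau> (mul a b) = mul (\<tau> a) (\<tau> b))"

definition nf_inv :: "('a \<Rightarrow> 'a \<Rightarrow> 'a) \<Rightarrow> 'a \<Rightarrow> 'a \<Rightarrow> 'a" where
  "nf_inv mul one g = (SOME d. mul d g = one \<and> mul g d = one)"

definition conj_map :: "('a \<Rightarrow> 'a \<Rightarrow> 'a) \<Rightarrow> 'a \<Rightarrow> 'a \<Rightarrow> 'a \<Rightarrow> 'a" where
  "conj_map mul one g = (\<lambda>a. mul (mul (nf_inv mul one g) a) g)"

definition add_tw :: "('a \<Rightarrow> 'a \<Rightarrow> 'a) \<Rightarrow> ('a \<Rightarrow> 'a) \<Rightarrow> 'a \<Rightarrow> 'a \<Rightarrow> 'a" where
  "add_tw add \<tau> a b = inv \<tau> (add (\<tau> a) (\<tau> b))"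

definition idx_rel :: "('a \<Rightarrow> 'a \<Rightarrow> 'a) \<Rightarrow> ('a \<Rightarrow> 'a \<Rightarrow> 'a) \<Rightarrow> 'a \<Rightarrow> 'a \<Rightarrow>
    ('i \<Rightarrow> 'a \<Rightarrow> 'a) \<Rightarrow> ('i \<Rightarrow> 'a \<Rightarrow> 'a) \<Rightarrow> 'i \<Rightarrow> 'i \<Rightarrow> bool" where
  "idx_rel add mul zero one \<sigma> \<rho> i j \<longleftrightarrow>
     (\<exists>g. g \<noteq> zero \<and>
        nf_aut add mul (\<sigma> i \<circ> \<rho> i \<circ> conj_map mul one g \<circ> inv (\<sigma> j \<circ> \<rho> j)))"

definition full_reps :: "('i \<Rightarrow> 'i \<Rightarrow> bool) \<Rightarrow> 'i set \<Rightarrow> bool" where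
  "full_reps R T \<longleftrightarrow> (\<forall>i. \<exists>!t. t \<in> T \<and> R i t)"

text \<open>Finitely supported families indexed by J, represented as functions that are zero outside J.\<close>
definition fs_carrier :: "'a \<Rightarrow> 'i set \<Rightarrow> ('i \<Rightarrow> 'a) set" where
  "fs_carrier zero J = {f. finite {i. f i \<noteq> zero} \<and> (\<forall>i. i \<notin> J \<longrightarrow> f i = zero)}"

definition fs_add :: "('a \<Rightarrow> 'a \<Rightarrow> 'a) \<Rightarrow> 'a \<Rightarrow> ('i \<Rightarrow> 'a \<Rightarrow> 'a) \<Rightarrow> 'i set \<Rightarrow>
    ('i \<Rightarrow> 'a) \<Rightarrow> ('i \<Rightarrow> 'a) \<Rightarrow> ('i \<Rightarrow> 'a)" where
  "fs_add add zero \<sigma> J f g = (\<lambda>i. if i \<in> J then add_tw add (\<sigma> i) (f i) (g i) else zero)"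

definition fs_smul :: "('a \<Rightarrow> 'a \<Rightarrow> 'a) \<Rightarrow> 'a \<Rightarrow> ('i \<Rightarrow> 'a \<Rightarrow> 'a) \<Rightarrow> 'i set \<Rightarrow>
    'a \<Rightarrow> ('i \<Rightarrow> 'a) \<Rightarrow> ('i \<Rightarrow> 'a)" where
  "fs_smul mul zero \<rho> J a f = (\<lambda>i. if i \<in> J then mul (\<rho> i a) (f i) else zero)"

definition ext_zero :: "'a \<Rightarrow> 'i set \<Rightarrow> ('i \<Rightarrow> 'a) \<Rightarrow> ('i \<Rightarrow> 'a)" where
  "ext_zero zero J f = (\<lambda>i. if i \<in> J then f i else zero)"

definition quasi_kernel :: "'v set \<Rightarrow> ('v \<Rightarrow> 'v \<Rightarrow> 'v) \<Rightarrow> ('a \<Rightarrow> 'v \<Rightarrow> 'v) \<Rightarrow> 'v set" where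
  "quasi_kernel W vadd smul = {u \<in> W. \<forall>a b. \<exists>c. vadd (smul a u) (smul b u) = smul c u}"

definition subspace :: "'v set \<Rightarrow> ('v \<Rightarrow> 'v \<Rightarrow> 'v) \<Rightarrow> ('a \<Rightarrow> 'v \<Rightarrow> 'v) \<Rightarrow> 'v set \<Rightarrow> bool" where
  "subspace V vadd smul W \<longleftrightarrow> W \<subseteq> V \<and> W \<noteq> {} \<and>
     (\<forall>u\<in>W. \<forall>v\<in>W. vadd u v \<in> W) \<and> (\<forall>a. \<forall>u\<in>W. smul a u \<in> W)"

text \<open>Near-vector space in the sense of Andre: (W,+) abelian group, F acting by endomorphisms,
  fixed-point-freely, and W additively generated by its quasi-kernel.\<close>
definition near_vector_space :: "('a \<Rightarrow> 'a \<Rightarrow> 'a) \<Rightarrow> 'a \<Rightarrow> 'a \<Rightarrow>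
    'v set \<Rightarrow> ('v \<Rightarrow> 'v \<Rightarrow> 'v) \<Rightarrow> ('a \<Rightarrow> 'v \<Rightarrow> 'v) \<Rightarrow> 'v \<Rightarrow> bool" where
  "near_vector_space mul zero one W vadd smul vzero \<longleftrightarrow>
     vzero \<in> W \<and>
     (\<forall>u\<in>W. \<forall>v\<in>W. vadd u v \<in> W) \<and>
     (\<forall>u\<in>W. \<forall>v\<in>W. \<forall>w\<in>W. vadd (vadd u v) w = vadd u (vadd v w)) \<and>
     (\<forall>u\<in>W. \<forall>v\<in>W. vadd u v = vadd v u) \<and>
     (\<forall>u\<in>W. vadd vzero u = u) \<and>
     (\<forall>u\<in>W. \<exists>v\<in>W. vadd u v = vzero) \<and>
     (\<forall>a. \<forall>u\<in>W. smul a u \<in> W) \<and>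
     (\<forall>a. \<forall>u\<in>W. \<forall>v\<in>W. smul a (vadd u v) = vadd (smul a u) (smul a v)) \<and>
     (\<forall>a b. \<forall>u\<in>W. smul (mul a b) u = smul a (smul b u)) \<and>
     (\<forall>u\<in>W. smul one u = u) \<and>
     (\<forall>u\<in>W. smul zero u = vzero) \<and>
     (\<forall>a b. \<forall>u\<in>W. smul a u = smul b u \<longrightarrow> u = vzero \<or> a = b) \<and>
     (\<forall>u\<in>W. \<exists>us. set us \<subseteq> quasi_kernel W vadd smul \<and> u = foldr vadd us vzero)"

definition compatible :: "'a \<Rightarrow> 'v set \<Rightarrow> ('v \<Rightarrow> 'v \<Rightarrow> 'v) \<Rightarrow> ('a \<Rightarrow> 'v \<Rightarrow> 'v) \<Rightarrow> 'v \<Rightarrow> 'v \<Rightarrow> bool" where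
  "compatible zero W vadd smul u v \<longleftrightarrow>
     (\<exists>l. l \<noteq> zero \<and> vadd u (smul l v) \<in> quasi_kernel W vadd smul)"

definition regular_nvs :: "('a \<Rightarrow> 'a \<Rightarrow> 'a) \<Rightarrow> 'a \<Rightarrow> 'a \<Rightarrow>
    'v set \<Rightarrow> ('v \<Rightarrow> 'v \<Rightarrow> 'v) \<Rightarrow> ('a \<Rightarrow> 'v \<Rightarrow> 'v) \<Rightarrow> 'v \<Rightarrow> bool" where
  "regular_nvs mul zero one W vadd smul vzero \<longleftrightarrow>
     near_vector_space mul zero one W vadd smul vzero \<and>
     (\<forall>u \<in> quasi_kernel W vadd smul - {vzero}. \<forall>v \<in> quasi_kernel W vadd smul - {vzero}.
        compatible zero W vadd smul u v)"

definition max_regular_subspace :: "('a \<Rightarrow> 'a \<Rightarrow> 'a) \<Rightarrow> 'a \<Rightarrow> 'a \<Rightarrow>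
    'v set \<Rightarrow> ('v \<Rightarrow> 'v \<Rightarrow> 'v) \<Rightarrow> ('a \<Rightarrow> 'v \<Rightarrow> 'v) \<Rightarrow> 'v \<Rightarrow> 'v set \<Rightarrow> bool" where
  "max_regular_subspace mul zero one V vadd smul vzero W \<longleftrightarrow>
     subspace V vadd smul W \<and> regular_nvs mul zero one W vadd smul vzero \<and>
     (\<forall>W'. subspace V vadd smul W' \<and> regular_nvs mul zero one W' vadd smul vzero \<and> W \<subseteq> W'
            \<longrightarrow> W' = W)"

definition internal_direct_sum :: "'v set \<Rightarrow> ('v \<Rightarrow> 'v \<Rightarrow> 'v) \<Rightarrow> 'v \<Rightarrow> 't set \<Rightarrow> ('t \<Rightarrow> 'v set) \<Rightarrow> bool" where
  "internal_direct_sum V vadd vzero T W \<longleftrightarrow>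
     (\<forall>t\<in>T. W t \<subseteq> V) \<and>
     (\<forall>v\<in>V. \<exists>ts g. distinct ts \<and> set ts \<subseteq> T \<and> (\<forall>t\<in>set ts. g t \<in> W t) \<and>
                   v = foldr (\<lambda>t acc. vadd (g t) acc) ts vzero) \<and>
     (\<forall>ts g. distinct ts \<and> set ts \<subseteq> T \<and> (\<forall>t\<in>set ts. g t \<in> W t) \<and>
             foldr (\<lambda>t acc. vadd (g t) acc) ts vzero = vzero \<longrightarrow> (\<forall>t\<in>set ts. g t = vzero))"

definition regular_decomposition_family :: "('a \<Rightarrow> 'a \<Rightarrow> 'a) \<Rightarrow> 'a \<Rightarrow> 'a \<Rightarrow>
    'v set \<Rightarrow> ('v \<Rightarrow> 'v \<Rightarrow> 'v) \<Rightarrow> ('a \<Rightarrow> 'v \<Rightarrow> 'v) \<Rightarrow> 'v \<Rightarrow> 't set \<Rightarrow> ('t \<Rightarrow> 'v set) \<Rightarrow> bool" where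
  "regular_decomposition_family mul zero one V vadd smul vzero T W \<longleftrightarrow>
     internal_direct_sum V vadd vzero T W \<and>
     (\<forall>t\<in>T. max_regular_subspace mul zero one V vadd smul vzero (W t))"

end

theory Submission
  imports Defs
begin

text \<open>Put \<open>\<tau>\<^sub>k = \<sigma>\<^sub>k \<circ> \<rho>\<^sub>k\<close> and transport the \<open>k\<close>-th coordinate of a vector \<open>u\<close>
  along \<open>\<sigma>\<^sub>k\<close> to \<open>w\<^sub>k = \<sigma>\<^sub>k(u\<^sub>k)\<close>. The twisted sum becomes the sum of \<open>F\<close>
  and \<open>a\<close> acts by left multiplication with \<open>\<tau>\<^sub>k(a)\<close>, so \<open>u\<close> lies in the quasi-kernel
  iff for all \<open>a, b\<close> one \<open>c\<close> satisfies \<open>\<tau>\<^sub>k(a) w\<^sub>k + \<tau>\<^sub>k(b) w\<^sub>k = \<tau>\<^sub>k(c) w\<^sub>k\<close>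
  in every coordinate \<open>k\<close>.

  If \<open>w\<^sub>i\<close> and \<open>w\<^sub>j\<close> are both nonzero, coordinate \<open>j\<close> determines \<open>c\<close>, and
  coordinate \<open>i\<close> then shows that \<open>\<tau>\<^sub>i \<circ> \<phi>\<^sub>g \<circ> \<tau>\<^sub>j\<^sup>-\<^sup>1\<close> is additive for a
  suitable \<open>g\<close>: the support of a quasi-kernel vector lies in one class of \<open>\<approx>\<close>.
  Conversely, the automorphism witnessing \<open>i \<approx> t\<close> turns the equations of a nonzero entry
  at \<open>i\<close> into those of a nonzero entry at \<open>t\<close>, so every quasi-kernel vector supported in
  the class of \<open>t\<close> is governed by a single entry at \<open>t\<close>. Rescaling one of two such
  vectors so that the governing entries agree makes their sum a quasi-kernel vector, which is
  regularity. For maximality, a quasi-kernel vector of a regular subspace containing all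
  vectors supported in the class of \<open>t\<close>, whose own support leaves that class, could be
  combined with the unit vector at \<open>t\<close> into a quasi-kernel vector whose support meets two
  classes.\<close>

section \<open>Near-fields\<close>

locale nearfield =
  fixes add mul :: "'a \<Rightarrow> 'a \<Rightarrow> 'a" and zero one :: 'a
  assumes near_field: "near_field add mul zero one"
begin

lemma add_assoc: "add (add a b) c = add a (add b c)"
  and add_commute: "add a b = add b a"
  and add_zero_left [simp]: "add zero a = a"
  and add_inverse_ex: "\<exists>b. add a b = zero"
  and mul_assoc: "mul (mul a b) c = mul a (mul b c)"
  and mul_one_left [simp]: "mul one a = a"
  and mul_one_right [simp]: "mul a one = a"
  and one_neq_zero [simp]: "one \<noteq> zero"
  and mul_nonzero: "a \<noteq> zero \<Longrightarrow> b \<noteq> zero \<Longrightarrow> mul a b \<noteq> zero"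
  and mul_inverse_ex: "a \<noteq> zero \<Longrightarrow> \<exists>b. mul b a = one \<and> mul a b = one"
  and distrib_left: "mul a (add b c) = add (mul a b) (mul a c)"
  using near_field unfolding near_field_def by blast+

sublocale add: abel_semigroup add
  by unfold_locales (fact add_assoc, fact add_commute)

lemma add_zero_right [simp]: "add a zero = a"
  by (metis add_commute add_zero_left)

lemma add_left_cancel:
  assumes "add a b = add a c" shows "b = c"
proof -
  obtain n where n: "add a n = zero" using add_inverse_ex by blast
  have "add (add n a) b = add (add n a) c"
    using assms by (simp add: add_assoc)
  then show ?thesis using n by (simp add: add_commute)
qed

lemma mul_zero_right [simp]: "mul a zero = zero"
proof -
  have "add (mul a zero) (mul a zero) = add (mul a zero) zero"
    using distrib_left[of a zero zero] by (simp add: add_commute)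
  then show ?thesis by (rule add_left_cancel)
qed

abbreviation ninv where "ninv \<equiv> nf_inv mul one"

lemma nf_inv_inverse: "g \<noteq> zero \<Longrightarrow> mul (ninv g) g = one \<and> mul g (ninv g) = one"
  unfolding nf_inv_def by (rule someI_ex) (rule mul_inverse_ex)

lemma nf_inv_left [simp]: "g \<noteq> zero \<Longrightarrow> mul (ninv g) g = one"
  and nf_inv_right [simp]: "g \<noteq> zero \<Longrightarrow> mul g (ninv g) = one"
  using nf_inv_inverse by blast+

lemma nf_inv_nonzero [simp]: "g \<noteq> zero \<Longrightarrow> ninv g \<noteq> zero"
  by (metis mul_zero_right nf_inv_right one_neq_zero)

lemma mul_zero_left [simp]: "mul zero a = zero"
proof (cases "a = zero")
  case False
  have "mul (mul zero a) (ninv a) = zero"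
    using False by (simp add: mul_assoc)
  then show ?thesis using False mul_nonzero nf_inv_nonzero by metis
qed simp

lemma mul_eq_zero_iff [simp]: "mul a b = zero \<longleftrightarrow> a = zero \<or> b = zero"
  using mul_nonzero by auto

lemma nf_inv_cancel_left [simp]: "g \<noteq> zero \<Longrightarrow> mul (ninv g) (mul g x) = x"
  and nf_inv_cancel_left' [simp]: "g \<noteq> zero \<Longrightarrow> mul g (mul (ninv g) x) = x"
  by (simp_all flip: mul_assoc)

lemma nf_inv_cancel_right [simp]: "g \<noteq> zero \<Longrightarrow> mul (mul x g) (ninv g) = x"
  and nf_inv_cancel_right' [simp]: "g \<noteq> zero \<Longrightarrow> mul (mul x (ninv g)) g = x"
  by (simp_all add: mul_assoc)

lemma mul_left_cancel_iff: "a \<noteq> zero \<Longrightarrow> mul a b = mul a c \<longleftrightarrow> b = c"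
  by (metis nf_inv_cancel_left)

lemma mul_right_cancel: "c \<noteq> zero \<Longrightarrow> mul a c = mul b c \<Longrightarrow> a = b"
  by (metis nf_inv_cancel_right)

lemma nf_inv_unique: "g \<noteq> zero \<Longrightarrow> mul x g = one \<Longrightarrow> ninv g = x"
  by (metis mul_right_cancel nf_inv_left)

definition neg :: "'a \<Rightarrow> 'a" where "neg a = (SOME b. add a b = zero)"

lemma add_neg [simp]: "add a (neg a) = zero"
  unfolding neg_def by (rule someI_ex) (rule add_inverse_ex)

lemma neg_zero [simp]: "neg zero = zero"
  by (metis add_neg add_zero_left)

lemma conj_map_apply: "conj_map mul one g x = mul (mul (ninv g) x) g"
  by (simp add: conj_map_def)

lemma conj_map_bij: "g \<noteq> zero \<Longrightarrow> bij (conj_map mul one g)"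
  by (rule bij_betw_byWitness[where f' = "\<lambda>x. mul (mul g x) (ninv g)"])
    (simp_all add: conj_map_apply mul_assoc)

lemma conj_map_mul: "g \<noteq> zero \<Longrightarrow>
    conj_map mul one g (mul x y) = mul (conj_map mul one g x) (conj_map mul one g y)"
  by (simp add: conj_map_apply mul_assoc)

lemma conj_map_one: "conj_map mul one one = id"
proof -
  have "ninv one = one" by (rule nf_inv_unique) simp_all
  then show ?thesis by (simp add: fun_eq_iff conj_map_apply)
qed

context
  fixes \<tau> :: "'a \<Rightarrow> 'a"
  assumes aut: "mult_aut mul one \<tau>"
begin

lemma mult_aut_mul: "\<tau> (mul a b) = mul (\<tau> a) (\<tau> b)"
  and mult_aut_one: "\<tau> one = one"
  and mult_aut_bij: "bij \<tau>"
  using aut unfolding mult_aut_def by blast+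

lemma mult_aut_eq_iff: "\<tau> a = \<tau> b \<longleftrightarrow> a = b"
  using mult_aut_bij by (simp add: bij_is_inj inj_eq)

lemma mult_aut_inv_apply: "\<tau> (inv \<tau> x) = x"
  and mult_aut_apply_inv: "inv \<tau> (\<tau> x) = x"
  using mult_aut_bij by (simp_all add: bij_is_surj surj_f_inv_f bij_is_inj inv_f_f)

lemma mult_aut_zero: "\<tau> zero = zero"
proof -
  obtain x where x: "\<tau> x = zero" by (metis mult_aut_inv_apply)
  have "\<tau> zero = mul (\<tau> zero) (\<tau> x)" by (simp flip: mult_aut_mul)
  then show ?thesis using x by simp
qed

lemma mult_aut_eq_zero_iff: "\<tau> a = zero \<longleftrightarrow> a = zero"
  using mult_aut_eq_iff[of a zero] by (simp add: mult_aut_zero)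

lemma mult_aut_nf_inv: "a \<noteq> zero \<Longrightarrow> \<tau> (ninv a) = ninv (\<tau> a)"
  by (rule nf_inv_unique[symmetric])
    (simp_all add: mult_aut_eq_zero_iff mult_aut_one flip: mult_aut_mul)

lemma mult_aut_inv: "mult_aut mul one (inv \<tau>)"
  unfolding mult_aut_def
  by (metis bij_imp_bij_inv mult_aut_bij mult_aut_apply_inv mult_aut_inv_apply mult_aut_mul mult_aut_one)

end

lemma mult_aut_comp: "mult_aut mul one \<tau> \<Longrightarrow> mult_aut mul one \<tau>' \<Longrightarrow> mult_aut mul one (\<tau> \<circ> \<tau>')"
  unfolding mult_aut_def by (auto intro: bij_comp)

end

section \<open>Transported coordinates\<close>

locale twisted_space = nearfield add mul zero one
  for add mul :: "'a \<Rightarrow> 'a \<Rightarrow> 'a" and zero one :: 'a +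
  fixes \<sigma> \<rho> :: "'i \<Rightarrow> 'a \<Rightarrow> 'a"
  assumes mult_aut_\<sigma>: "mult_aut mul one (\<sigma> i)"
    and mult_aut_\<rho>: "mult_aut mul one (\<rho> i)"
begin

definition tau :: "'i \<Rightarrow> 'a \<Rightarrow> 'a" where "tau i = \<sigma> i \<circ> \<rho> i"

lemma mult_aut_tau: "mult_aut mul one (tau i)"
  unfolding tau_def by (rule mult_aut_comp[OF mult_aut_\<sigma> mult_aut_\<rho>])

lemmas mult_auts = mult_aut_\<sigma> mult_aut_\<rho> mult_aut_tau
  mult_aut_inv[OF mult_aut_\<sigma>] mult_aut_inv[OF mult_aut_tau]

lemmas mult_aut_simps [simp] =
  mult_auts[THEN mult_aut_zero] mult_auts[THEN mult_aut_one]
  mult_auts[THEN mult_aut_eq_iff] mult_auts[THEN mult_aut_eq_zero_iff]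
  mult_auts[THEN mult_aut_inv_apply] mult_auts[THEN mult_aut_apply_inv]

abbreviation related :: "'i \<Rightarrow> 'i \<Rightarrow> bool"
  where "related \<equiv> idx_rel add mul zero one \<sigma> \<rho>"
abbreviation space :: "'i set \<Rightarrow> ('i \<Rightarrow> 'a) set"
  where "space \<equiv> fs_carrier zero"
abbreviation vadd :: "('i \<Rightarrow> 'a) \<Rightarrow> ('i \<Rightarrow> 'a) \<Rightarrow> 'i \<Rightarrow> 'a"
  where "vadd \<equiv> fs_add add zero \<sigma> UNIV"
abbreviation smul :: "'a \<Rightarrow> ('i \<Rightarrow> 'a) \<Rightarrow> 'i \<Rightarrow> 'a"
  where "smul \<equiv> fs_smul mul zero \<rho> UNIV"
abbreviation vzero :: "'i \<Rightarrow> 'a"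
  where "vzero \<equiv> \<lambda>i. zero"

lemma vadd_apply: "vadd u v i = inv (\<sigma> i) (add (\<sigma> i (u i)) (\<sigma> i (v i)))"
  by (simp add: fs_add_def add_tw_def)

lemma smul_apply [simp]: "smul a u i = mul (\<rho> i a) (u i)"
  by (simp add: fs_smul_def)

lemma \<sigma>_vadd [simp]: "\<sigma> i (vadd u v i) = add (\<sigma> i (u i)) (\<sigma> i (v i))"
  by (simp add: vadd_apply)

lemma \<sigma>_mul_\<rho> [simp]: "\<sigma> i (mul (\<rho> i a) x) = mul (tau i a) (\<sigma> i x)"
  by (simp add: tau_def mult_aut_mul[OF mult_aut_\<sigma>])

lemma vadd_eq_iff: "vadd u v = w \<longleftrightarrow> (\<forall>i. add (\<sigma> i (u i)) (\<sigma> i (v i)) = \<sigma> i (w i))"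
proof -
  have "inv (\<sigma> i) y = x \<longleftrightarrow> y = \<sigma> i x" for i x y
    by (metis mult_aut_apply_inv[OF mult_aut_\<sigma>] mult_aut_inv_apply[OF mult_aut_\<sigma>])
  then show ?thesis by (simp add: fun_eq_iff vadd_apply)
qed

lemma vadd_zero_left: "u i = zero \<Longrightarrow> vadd u v i = v i"
  and vadd_zero_right: "v i = zero \<Longrightarrow> vadd u v i = u i"
  by (simp_all add: vadd_apply)

definition coord_sum :: "'i \<Rightarrow> 'a \<Rightarrow> 'a \<Rightarrow> 'a \<Rightarrow> 'a \<Rightarrow> bool" where
  "coord_sum k w a b c \<longleftrightarrow> add (mul (tau k a) w) (mul (tau k b) w) = mul (tau k c) w"

definition coherent :: "('i \<Rightarrow> 'a) \<Rightarrow> bool" where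
  "coherent w \<longleftrightarrow> (\<forall>a b. \<exists>c. \<forall>k. coord_sum k (w k) a b c)"

lemma smul_sum_eq_iff:
  "vadd (smul a u) (smul b u) = smul c u \<longleftrightarrow> (\<forall>k. coord_sum k (\<sigma> k (u k)) a b c)"
  by (simp add: vadd_eq_iff coord_sum_def)

lemma quasi_kernel_iff:
  "u \<in> quasi_kernel W vadd smul \<longleftrightarrow> u \<in> W \<and> coherent (\<lambda>k. \<sigma> k (u k))"
  by (simp add: quasi_kernel_def coherent_def smul_sum_eq_iff)

lemma coord_sum_zero [simp]: "coord_sum k zero a b c"
  by (simp add: coord_sum_def)

lemma coord_sum_ex: "\<exists>c. coord_sum k w a b c"
proof (cases "w = zero")
  case False
  let ?c = "inv (tau k) (mul (add (mul (tau k a) w) (mul (tau k b) w)) (ninv w))"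
  have "coord_sum k w a b ?c"
    using False by (simp add: coord_sum_def mult_aut_inv_apply[OF mult_aut_tau])
  then show ?thesis ..
qed simp

lemma coord_sum_unique: "w \<noteq> zero \<Longrightarrow> coord_sum k w a b c \<Longrightarrow> coord_sum k w a b c' \<Longrightarrow> c = c'"
  unfolding coord_sum_def by (metis mul_right_cancel mult_aut_eq_iff[OF mult_aut_tau])

lemma coord_sum_scale:
  "coord_sum k (mul (tau k l) w) a b c \<longleftrightarrow> coord_sum k w (mul a l) (mul b l) (mul c l)"
  by (simp add: coord_sum_def mult_aut_mul[OF mult_aut_tau] mul_assoc)

lemma coord_sum_add:
  assumes "coord_sum k w a b c" "coord_sum k w' a b c"
  shows "coord_sum k (add w w') a b c"
proof -
  have "add (add x y) (add x' y') = add (add x x') (add y y')" for x y x' y'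
    by (simp add: add.assoc add.left_commute)
  then show ?thesis using assms unfolding coord_sum_def distrib_left by metis
qed

definition conj_twist :: "'i \<Rightarrow> 'i \<Rightarrow> 'a \<Rightarrow> 'a \<Rightarrow> 'a" where
  "conj_twist i j g = \<sigma> i \<circ> \<rho> i \<circ> conj_map mul one g \<circ> inv (\<sigma> j \<circ> \<rho> j)"

lemma related_iff: "related i j \<longleftrightarrow> (\<exists>g. g \<noteq> zero \<and> nf_aut add mul (conj_twist i j g))"
  by (simp add: idx_rel_def conj_twist_def)

lemma conj_twist_apply: "conj_twist i j g x = tau i (conj_map mul one g (inv (tau j) x))"
  by (simp add: conj_twist_def tau_def)

lemma conj_twist_mul:
  "g \<noteq> zero \<Longrightarrow> conj_twist i j g (mul x y) = mul (conj_twist i j g x) (conj_twist i j g y)"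
  by (simp add: conj_twist_apply conj_map_mul mult_aut_mul[OF mult_aut_tau]
      mult_aut_mul[OF mult_aut_inv[OF mult_aut_tau]])

lemma conj_twist_bij: "g \<noteq> zero \<Longrightarrow> bij (conj_twist i j g)"
  unfolding conj_twist_def
  using mult_aut_bij[OF mult_aut_\<sigma>] mult_aut_bij[OF mult_aut_\<rho>] mult_aut_bij[OF mult_aut_tau]
    conj_map_bij
  by (auto simp: tau_def intro!: bij_comp bij_imp_bij_inv)

lemma related_if_additive:
  assumes "g \<noteq> zero"
    and "\<And>x y. conj_twist i j g (add x y) = add (conj_twist i j g x) (conj_twist i j g y)"
  shows "related i j"
  using assms conj_twist_bij conj_twist_mul by (auto simp: related_iff nf_aut_def)

lemma related_refl: "related t t"
proof (rule related_if_additive)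
  have "conj_twist t t one = id"
    by (simp add: conj_twist_apply conj_map_one fun_eq_iff)
  then show "conj_twist t t one (add x y) = add (conj_twist t t one x) (conj_twist t t one y)"
    for x y by simp
qed simp

lemma coherent_support_related:
  assumes coh: "coherent w" and wi: "w i \<noteq> zero" and wj: "w j \<noteq> zero"
  shows "related i j"
proof -
  define p q where "p = inv (tau j) (w j)" and "q = inv (tau i) (w i)"
  have pq: "p \<noteq> zero" "q \<noteq> zero" "tau j p = w j" "tau i q = w i"
    using wi wj by (simp_all add: p_def q_def)
  define g where "g = mul (ninv p) q"
  have g: "g \<noteq> zero" "ninv g = mul (ninv q) p"
    using pq by (simp_all add: g_def mul_assoc nf_inv_unique)
  txt \<open>With \<open>\<alpha> x\<close> chosen so that \<open>tau j (\<alpha> x) * w j = w j * x\<close>, the twist is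
    \<open>x \<mapsto> (w i)\<^sup>-\<^sup>1 * tau i (\<alpha> x) * w i\<close>; coherence at the scalars \<open>\<alpha> x, \<alpha> y\<close>
    makes it additive, since coordinate \<open>j\<close> forces the common \<open>c\<close> to be \<open>\<alpha> (x + y)\<close>.\<close>
  define \<alpha> where "\<alpha> x = mul (mul p (inv (tau j) x)) (ninv p)" for x
  have \<alpha>: "mul (tau j (\<alpha> x)) (w j) = mul (w j) x" for x
    using pq wj by (simp add: \<alpha>_def mult_aut_mul[OF mult_aut_tau] mult_aut_nf_inv[OF mult_aut_tau])
  have twist_\<alpha>: "conj_twist i j g x = mul (ninv (w i)) (mul (tau i (\<alpha> x)) (w i))" for x
    using pq g by (simp add: conj_twist_apply conj_map_apply \<alpha>_def g_def mul_assoc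
        mult_aut_mul[OF mult_aut_tau] mult_aut_nf_inv[OF mult_aut_tau])
  show ?thesis
  proof (rule related_if_additive[OF g(1)])
    fix x y
    obtain c where c: "\<And>k. coord_sum k (w k) (\<alpha> x) (\<alpha> y) c"
      using coh unfolding coherent_def by blast
    have "coord_sum j (w j) (\<alpha> x) (\<alpha> y) (\<alpha> (add x y))"
      by (simp add: coord_sum_def \<alpha> distrib_left)
    then have "c = \<alpha> (add x y)"
      using c coord_sum_unique[OF wj] by blast
    then have "coord_sum i (w i) (\<alpha> x) (\<alpha> y) (\<alpha> (add x y))"
      using c by simp
    then show "conj_twist i j g (add x y) = add (conj_twist i j g x) (conj_twist i j g y)"
      unfolding twist_\<alpha> coord_sum_def by (simp flip: distrib_left)
  qed
qed

lemma coord_sum_transfer: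
  assumes "related i t" and w: "w \<noteq> zero"
  obtains w' where "w' \<noteq> zero" "\<And>a b c. coord_sum i w a b c \<longleftrightarrow> coord_sum t w' a b c"
proof -
  obtain g where g: "g \<noteq> zero" and aut: "nf_aut add mul (conj_twist i t g)"
    using assms(1) unfolding related_iff by blast
  define B where "B = conj_twist i t g"
  have "bij B" and B_add: "\<And>x y. B (add x y) = add (B x) (B y)"
    and B_mul: "\<And>x y. B (mul x y) = mul (B x) (B y)"
    using aut unfolding B_def nf_aut_def by blast+
  then have B_inj: "B x = B y \<longleftrightarrow> x = y" for x y
    by (simp add: bij_is_inj inj_eq)
  have B_zero: "B zero = zero"
    using B_add[of zero zero] by (metis add_left_cancel add_zero_right)
  define d where "d = tau i g"
  have d: "d \<noteq> zero"
    using g by (simp add: d_def)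
  have tau_i: "tau i y = mul d (mul (B (tau t y)) (ninv d))" for y
    using g d by (simp add: B_def d_def conj_twist_apply conj_map_apply mul_assoc
        mult_aut_mul[OF mult_aut_tau] mult_aut_nf_inv[OF mult_aut_tau])
  define w' where "w' = inv B (mul (ninv d) w)"
  have B_w': "B w' = mul (ninv d) w"
    using \<open>bij B\<close> by (simp add: w'_def bij_is_surj surj_f_inv_f)
  have "w' \<noteq> zero"
    using B_w' B_zero d w by (metis mul_eq_zero_iff nf_inv_nonzero)
  moreover have scaled: "mul (tau i x) w = mul d (B (mul (tau t x) w'))" for x
    using d by (simp add: tau_i B_mul B_w' mul_assoc)
  have "coord_sum i w a b c \<longleftrightarrow> coord_sum t w' a b c" for a b c
    unfolding coord_sum_def scaled
    by (simp add: mul_left_cancel_iff[OF d] B_inj flip: distrib_left B_add)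
  ultimately show ?thesis using that by blast
qed

definition governs :: "'i \<Rightarrow> 'a \<Rightarrow> ('i \<Rightarrow> 'a) \<Rightarrow> bool" where
  "governs t a\<^sub>0 w \<longleftrightarrow> (\<forall>a b c. coord_sum t a\<^sub>0 a b c \<longrightarrow> (\<forall>k. coord_sum k (w k) a b c))"

lemma governs_coherent: "governs t a\<^sub>0 w \<Longrightarrow> coherent w"
  unfolding governs_def coherent_def by (meson coord_sum_ex)

lemma governs_add:
  "governs t a\<^sub>0 w \<Longrightarrow> governs t a\<^sub>0 w' \<Longrightarrow> governs t a\<^sub>0 (\<lambda>k. add (w k) (w' k))"
  unfolding governs_def by (simp add: coord_sum_add)

lemma governs_scale:
  "governs t b\<^sub>0 w \<Longrightarrow> governs t (mul (tau t l) b\<^sub>0) (\<lambda>k. mul (tau k l) (w k))"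
  unfolding governs_def by (simp add: coord_sum_scale)

lemma coherent_governed:
  assumes coh: "coherent w" and wi: "w i \<noteq> zero" and "related i t"
  obtains a\<^sub>0 where "a\<^sub>0 \<noteq> zero" "governs t a\<^sub>0 w"
proof -
  obtain a\<^sub>0 where a\<^sub>0: "a\<^sub>0 \<noteq> zero" "\<And>a b c. coord_sum i (w i) a b c \<longleftrightarrow> coord_sum t a\<^sub>0 a b c"
    using coord_sum_transfer[OF \<open>related i t\<close> wi] by blast
  have "\<forall>k. coord_sum k (w k) a b c" if "coord_sum t a\<^sub>0 a b c" for a b c
  proof -
    obtain c' where c': "\<forall>k. coord_sum k (w k) a b c'"
      using coh unfolding coherent_def by blast
    then have "c' = c"
      using coord_sum_unique[OF a\<^sub>0(1)] that a\<^sub>0(2) by blast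
    then show ?thesis using c' by simp
  qed
  then show ?thesis
    using that a\<^sub>0(1) unfolding governs_def by blast
qed

lemma coherent_combination:
  assumes "coherent w" "w i \<noteq> zero" "related i t"
    and "coherent w'" "w' j \<noteq> zero" "related j t"
  obtains l where "l \<noteq> zero" "coherent (\<lambda>k. add (w k) (mul (tau k l) (w' k)))"
proof -
  obtain a\<^sub>0 where a\<^sub>0: "a\<^sub>0 \<noteq> zero" "governs t a\<^sub>0 w"
    using coherent_governed assms(1-3) by blast
  obtain b\<^sub>0 where b\<^sub>0: "b\<^sub>0 \<noteq> zero" "governs t b\<^sub>0 w'"
    using coherent_governed assms(4-6) by blast
  define l where "l = inv (tau t) (mul a\<^sub>0 (ninv b\<^sub>0))"
  have "mul (tau t l) b\<^sub>0 = a\<^sub>0"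
    using b\<^sub>0(1) by (simp add: l_def mult_aut_inv_apply[OF mult_aut_tau])
  then have "governs t a\<^sub>0 (\<lambda>k. mul (tau k l) (w' k))"
    using governs_scale[OF b\<^sub>0(2)] by metis
  then have "coherent (\<lambda>k. add (w k) (mul (tau k l) (w' k)))"
    using governs_add[OF a\<^sub>0(2)] governs_coherent by blast
  moreover have "l \<noteq> zero"
    using a\<^sub>0(1) b\<^sub>0(1) by (simp add: l_def)
  ultimately show ?thesis using that by blast
qed

section \<open>The near-vector space of finitely supported families\<close>

lemma space_iff: "u \<in> space J \<longleftrightarrow> finite {i. u i \<noteq> zero} \<and> (\<forall>i. i \<notin> J \<longrightarrow> u i = zero)"
  by (simp add: fs_carrier_def)

lemma space_mono: "J \<subseteq> K \<Longrightarrow> space J \<subseteq> space K"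
  unfolding subset_iff space_iff by blast

lemma vzero_in_space: "vzero \<in> space J"
  by (simp add: space_iff)

lemma vadd_in_space:
  assumes "u \<in> space J" "v \<in> space J" shows "vadd u v \<in> space J"
proof -
  have "{i. vadd u v i \<noteq> zero} \<subseteq> {i. u i \<noteq> zero} \<union> {i. v i \<noteq> zero}"
    using vadd_zero_left by fastforce
  then show ?thesis
    using assms unfolding space_iff by (auto intro: finite_subset simp: vadd_zero_left)
qed

lemma smul_in_space: "u \<in> space J \<Longrightarrow> smul a u \<in> space J"
  unfolding space_iff by (auto elim: rev_finite_subset)

lemma foldr_vadd_in_space: "set us \<subseteq> space J \<Longrightarrow> foldr vadd us vzero \<in> space J"
  by (induction us) (simp_all add: vzero_in_space vadd_in_space)

lemma vadd_assoc: "vadd (vadd u v) w = vadd u (vadd v w)"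
  by (simp add: fun_eq_iff vadd_apply add.assoc)

lemma vadd_commute: "vadd u v = vadd v u"
  by (simp add: fun_eq_iff vadd_apply add.commute)

lemma vadd_vzero_left: "vadd vzero u = u"
  by (simp add: fun_eq_iff vadd_zero_left)

definition vneg :: "('i \<Rightarrow> 'a) \<Rightarrow> 'i \<Rightarrow> 'a" where
  "vneg u = (\<lambda>k. inv (\<sigma> k) (neg (\<sigma> k (u k))))"

lemma vadd_vneg: "vadd u (vneg u) = vzero"
  by (simp add: fun_eq_iff vadd_apply vneg_def)

lemma vneg_in_space:
  assumes "u \<in> space J" shows "vneg u \<in> space J"
proof -
  have vneg_zero: "u i = zero \<Longrightarrow> vneg u i = zero" for i
    by (simp add: vneg_def)
  then have "{i. vneg u i \<noteq> zero} \<subseteq> {i. u i \<noteq> zero}"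
    by blast
  then show ?thesis
    using assms vneg_zero unfolding space_iff by (metis rev_finite_subset)
qed

lemma smul_vadd: "smul a (vadd u v) = vadd (smul a u) (smul a v)"
  by (subst eq_commute) (simp add: vadd_eq_iff distrib_left)

lemma smul_mul: "smul (mul a b) u = smul a (smul b u)"
  by (simp add: fun_eq_iff mult_aut_mul[OF mult_aut_\<rho>] mul_assoc)

lemma smul_eq_smulD:
  assumes "smul a u = smul b u" shows "u = vzero \<or> a = b"
proof (cases "u = vzero")
  case False
  then obtain k where k: "u k \<noteq> zero" by auto
  have "mul (\<rho> k a) (u k) = mul (\<rho> k b) (u k)"
    using assms by (metis smul_apply)
  then have "\<rho> k a = \<rho> k b"
    by (rule mul_right_cancel[OF k])
  then show ?thesis by simp
qed simp

definition unit_vec :: "'i \<Rightarrow> 'a \<Rightarrow> 'i \<Rightarrow> 'a" where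
  "unit_vec i x = (\<lambda>k. if k = i then x else zero)"

lemma unit_vec_in_space: "i \<in> J \<Longrightarrow> unit_vec i x \<in> space J"
  unfolding space_iff unit_vec_def by (auto elim: rev_finite_subset[of "{i}"])

lemma coherent_unit_vec: "coherent (\<lambda>k. \<sigma> k (unit_vec i x k))"
  unfolding coherent_def
proof (intro allI)
  fix a b
  obtain c where "coord_sum i (\<sigma> i x) a b c"
    using coord_sum_ex by blast
  then have "\<forall>k. coord_sum k (\<sigma> k (unit_vec i x k)) a b c"
    by (simp add: unit_vec_def)
  then show "\<exists>c. \<forall>k. coord_sum k (\<sigma> k (unit_vec i x k)) a b c" ..
qed

lemma unit_vec_in_quasi_kernel:
  "unit_vec i x \<in> W \<Longrightarrow> unit_vec i x \<in> quasi_kernel W vadd smul"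
  by (simp add: quasi_kernel_iff coherent_unit_vec)

lemma quasi_kernel_support_related:
  assumes "u \<in> quasi_kernel W vadd smul" "u i \<noteq> zero" "u j \<noteq> zero"
  shows "related i j"
  using assms coherent_support_related[of "\<lambda>k. \<sigma> k (u k)" i j] by (simp add: quasi_kernel_iff)

lemma foldr_vadd_disjoint_supports:
  assumes "distinct ts" and "\<And>t k. t \<in> set ts \<Longrightarrow> g t k \<noteq> zero \<Longrightarrow> lbl k = t"
  shows "foldr (\<lambda>t. vadd (g t)) ts vzero = (\<lambda>k. if lbl k \<in> set ts then g (lbl k) k else zero)"
  using assms
proof (induction ts)
  case (Cons a ts)
  show ?case
  proof
    fix k
    show "foldr (\<lambda>t. vadd (g t)) (a # ts) vzero k
        = (if lbl k \<in> set (a # ts) then g (lbl k) k else zero)"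
    proof (cases "lbl k = a")
      case False
      then have "g a k = zero" using Cons.prems(2) by force
      then show ?thesis using False Cons by (simp add: vadd_zero_left)
    qed (use Cons in \<open>simp add: vadd_zero_right\<close>)
  qed
qed simp

lemma space_generated_by_quasi_kernel:
  assumes u: "u \<in> space J"
  shows "\<exists>us. set us \<subseteq> quasi_kernel (space J) vadd smul \<and> u = foldr vadd us vzero"
proof -
  obtain xs where xs: "set xs = {i. u i \<noteq> zero}" "distinct xs"
    using u finite_distinct_list unfolding space_iff by meson
  define us where "us = map (\<lambda>i. unit_vec i (u i)) xs"
  have "unit_vec t (u t) k \<noteq> zero \<Longrightarrow> k = t" for t k
    by (simp add: unit_vec_def split: if_splits)
  then have "foldr vadd us vzero = (\<lambda>k. if k \<in> set xs then unit_vec k (u k) k else zero)"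
    using foldr_vadd_disjoint_supports[OF xs(2), of "\<lambda>i. unit_vec i (u i)" "\<lambda>k. k"]
    by (simp add: us_def foldr_map comp_def)
  also have "\<dots> = u"
    using xs(1) by (auto simp: unit_vec_def)
  finally have "u = foldr vadd us vzero" ..
  moreover have "set us \<subseteq> quasi_kernel (space J) vadd smul"
  proof
    fix v assume "v \<in> set us"
    then obtain i where "u i \<noteq> zero" "v = unit_vec i (u i)"
      using xs(1) by (auto simp: us_def)
    moreover have "i \<in> J" using u \<open>u i \<noteq> zero\<close> by (auto simp: space_iff)
    ultimately show "v \<in> quasi_kernel (space J) vadd smul"
      by (simp add: unit_vec_in_quasi_kernel unit_vec_in_space)
  qed
  ultimately show ?thesis by blast
qed

lemma near_vector_space_space: "near_vector_space mul zero one (space J) vadd smul vzero"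
  unfolding near_vector_space_def
proof (intro conjI)
  show "\<forall>u\<in>space J. \<exists>v\<in>space J. vadd u v = vzero"
    using vneg_in_space vadd_vneg by blast
  show "\<forall>a b. \<forall>u\<in>space J. smul a u = smul b u \<longrightarrow> u = vzero \<or> a = b"
    using smul_eq_smulD by blast
  show "\<forall>u\<in>space J. \<exists>us. set us \<subseteq> quasi_kernel (space J) vadd smul \<and> u = foldr vadd us vzero"
    using space_generated_by_quasi_kernel by blast
  show "\<forall>u\<in>space J. \<forall>v\<in>space J. vadd u v = vadd v u"
    using vadd_commute by blast
qed (auto simp: vzero_in_space vadd_in_space smul_in_space vadd_assoc vadd_vzero_left
       smul_vadd smul_mul)

section \<open>The class subspaces\<close>

abbreviation idx_class :: "'i \<Rightarrow> 'i set" where "idx_class t \<equiv> {i. related i t}"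

lemma subspace_space: "J \<subseteq> K \<Longrightarrow> subspace (space K) vadd smul (space J)"
  unfolding subspace_def
  using space_mono[of J K] vzero_in_space[of J] by (auto intro: vadd_in_space smul_in_space)

lemma regular_class_space: "regular_nvs mul zero one (space (idx_class t)) vadd smul vzero"
  unfolding regular_nvs_def compatible_def
proof (intro conjI ballI near_vector_space_space)
  fix u v
  assume u: "u \<in> quasi_kernel (space (idx_class t)) vadd smul - {vzero}"
    and v: "v \<in> quasi_kernel (space (idx_class t)) vadd smul - {vzero}"
  obtain i j where "u i \<noteq> zero" "v j \<noteq> zero"
    using u v by (auto simp: fun_eq_iff)
  moreover have "related i t" "related j t"
    using u v calculation by (auto simp: quasi_kernel_iff space_iff)
  moreover have "coherent (\<lambda>k. \<sigma> k (u k))" "coherent (\<lambda>k. \<sigma> k (v k))"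
    using u v by (simp_all add: quasi_kernel_iff)
  ultimately obtain l
    where "l \<noteq> zero" "coherent (\<lambda>k. add (\<sigma> k (u k)) (mul (tau k l) (\<sigma> k (v k))))"
    using coherent_combination[of "\<lambda>k. \<sigma> k (u k)" i t "\<lambda>k. \<sigma> k (v k)" j] by auto
  moreover have "vadd u (smul l v) \<in> space (idx_class t)"
    using u v by (simp add: quasi_kernel_iff vadd_in_space smul_in_space)
  ultimately show "\<exists>l. l \<noteq> zero \<and> vadd u (smul l v) \<in> quasi_kernel (space (idx_class t)) vadd smul"
    by (auto simp: quasi_kernel_iff)
qed

lemma quasi_kernel_in_class_space:
  assumes W: "subspace (space UNIV) vadd smul W" "regular_nvs mul zero one W vadd smul vzero"
    and class_W: "space (idx_class t) \<subseteq> W"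
    and q: "q \<in> quasi_kernel W vadd smul"
  shows "q \<in> space (idx_class t)"
proof (rule ccontr)
  assume "q \<notin> space (idx_class t)"
  moreover have "q \<in> space UNIV"
    using q W(1) by (auto simp: quasi_kernel_iff subspace_def)
  ultimately obtain j where j: "q j \<noteq> zero" "\<not> related j t"
    by (auto simp: space_iff)
  then have "j \<noteq> t"
    using related_refl by blast
  show False
  proof (cases "q t = zero")
    case False
    then show False
      using quasi_kernel_support_related[OF q] j by blast
  next
    case True
    txt \<open>Then compatibility of \<open>q\<close> with the unit vector at \<open>t\<close> produces a quasi-kernel
      vector with nonzero entries at both \<open>t\<close> and \<open>j\<close>.\<close>
    define e where "e = unit_vec t one"
    have "e \<in> W"
      using class_W unit_vec_in_space[of t "idx_class t" one] related_refl by (auto simp: e_def)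
    moreover have "e \<noteq> vzero"
      by (auto simp: e_def unit_vec_def fun_eq_iff)
    ultimately have "e \<in> quasi_kernel W vadd smul - {vzero}"
      by (simp add: e_def unit_vec_in_quasi_kernel)
    moreover have "q \<in> quasi_kernel W vadd smul - {vzero}"
      using q j by auto
    ultimately obtain l where l: "l \<noteq> zero" "vadd e (smul l q) \<in> quasi_kernel W vadd smul"
      using W(2) unfolding regular_nvs_def compatible_def by blast
    moreover have "vadd e (smul l q) t = one"
      using True by (simp add: e_def unit_vec_def vadd_zero_right)
    moreover have "vadd e (smul l q) j = mul (\<rho> j l) (q j)"
      using \<open>j \<noteq> t\<close> by (simp add: e_def unit_vec_def vadd_zero_left)
    ultimately have "related j t"
      using quasi_kernel_support_related[of "vadd e (smul l q)" W j t] j(1) by simp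
    with j show False by simp
  qed
qed

lemma class_space_maximal:
  assumes "subspace (space UNIV) vadd smul W" "regular_nvs mul zero one W vadd smul vzero"
    and "space (idx_class t) \<subseteq> W"
  shows "W = space (idx_class t)"
proof
  show "W \<subseteq> space (idx_class t)"
  proof
    fix x assume "x \<in> W"
    moreover have "near_vector_space mul zero one W vadd smul vzero"
      using assms(2) by (simp add: regular_nvs_def)
    then have "\<forall>u\<in>W. \<exists>us. set us \<subseteq> quasi_kernel W vadd smul \<and> u = foldr vadd us vzero"
      unfolding near_vector_space_def by (elim conjE)
    ultimately obtain us where us: "set us \<subseteq> quasi_kernel W vadd smul" "x = foldr vadd us vzero"
      by blast
    then have "set us \<subseteq> space (idx_class t)"
      using quasi_kernel_in_class_space[OF assms] by blast
    then show "x \<in> space (idx_class t)"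
      using us(2) foldr_vadd_in_space by simp
  qed
qed (rule assms(3))

lemma max_regular_subspace_class_space:
  "max_regular_subspace mul zero one (space UNIV) vadd smul vzero (space (idx_class t))"
  unfolding max_regular_subspace_def
  using subspace_space[of _ UNIV] regular_class_space class_space_maximal by simp

end

locale class_decomposition = twisted_space add mul zero one \<sigma> \<rho>
  for add mul :: "'a \<Rightarrow> 'a \<Rightarrow> 'a" and zero one :: 'a and \<sigma> \<rho> :: "'i \<Rightarrow> 'a \<Rightarrow> 'a" +
  fixes T :: "'i set"
  assumes full_reps: "full_reps (idx_rel add mul zero one \<sigma> \<rho>) T"
begin

definition rep :: "'i \<Rightarrow> 'i" where "rep i = (THE t. t \<in> T \<and> related i t)"

lemma rep_in_reps: "rep i \<in> T" and related_rep: "related i (rep i)"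
  using full_reps theI'[of "\<lambda>t. t \<in> T \<and> related i t"] unfolding full_reps_def rep_def by blast+

lemma rep_unique: "t \<in> T \<Longrightarrow> related i t \<Longrightarrow> rep i = t"
  using full_reps rep_in_reps related_rep unfolding full_reps_def by blast

lemma foldr_vadd_class_spaces:
  assumes "distinct ts" "set ts \<subseteq> T" "\<forall>t\<in>set ts. g t \<in> space (idx_class t)"
  shows "foldr (\<lambda>t. vadd (g t)) ts vzero = (\<lambda>k. if rep k \<in> set ts then g (rep k) k else zero)"
proof (rule foldr_vadd_disjoint_supports[OF assms(1)])
  fix t k assume "t \<in> set ts" "g t k \<noteq> zero"
  then show "rep k = t"
    using assms(2,3) by (auto simp: space_iff intro: rep_unique)
qed

lemma class_spaces_span:
  assumes v: "v \<in> space UNIV"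
  obtains ts g where "distinct ts" "set ts \<subseteq> T" "\<forall>t\<in>set ts. g t \<in> space (idx_class t)"
    "v = foldr (\<lambda>t. vadd (g t)) ts vzero"
proof -
  have "finite (rep ` {i. v i \<noteq> zero})"
    using v by (simp add: space_iff)
  then obtain ts where ts: "set ts = rep ` {i. v i \<noteq> zero}" "distinct ts"
    using finite_distinct_list by meson
  define g where "g t = (\<lambda>i. if related i t then v i else zero)" for t
  have "g t \<in> space (idx_class t)" for t
  proof -
    have "{i. g t i \<noteq> zero} \<subseteq> {i. v i \<noteq> zero}"
      by (auto simp: g_def)
    then show ?thesis
      using v by (auto simp: space_iff g_def elim: rev_finite_subset)
  qed
  moreover have "set ts \<subseteq> T"
    using ts(1) rep_in_reps by auto
  moreover have "foldr (\<lambda>t. vadd (g t)) ts vzero = v"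
    using foldr_vadd_class_spaces[OF ts(2)] calculation ts(1) related_rep
    by (auto simp: fun_eq_iff g_def)
  ultimately show ?thesis
    using that ts(2) by metis
qed

lemma class_spaces_independent:
  assumes "distinct ts" "set ts \<subseteq> T" "\<forall>t\<in>set ts. g t \<in> space (idx_class t)"
    and sum: "foldr (\<lambda>t. vadd (g t)) ts vzero = vzero" and t: "t \<in> set ts"
  shows "g t = vzero"
proof
  fix i
  show "g t i = zero"
  proof (cases "related i t")
    case True
    then have "rep i = t"
      using t assms(2) rep_unique by blast
    then show ?thesis
      using fun_cong[OF foldr_vadd_class_spaces[OF assms(1-3)], of i] sum t by simp
  next
    case False
    then show ?thesis
      using assms(3) t by (auto simp: space_iff)
  qed
qed

lemma internal_direct_sum_class_spaces:
  "internal_direct_sum (space UNIV) vadd vzero T (\<lambda>t. space (idx_class t))"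
  unfolding internal_direct_sum_def
proof (intro conjI ballI allI impI)
  show "space (idx_class t) \<subseteq> space UNIV" for t
    by (rule space_mono) simp
  show "\<exists>ts g. distinct ts \<and> set ts \<subseteq> T \<and> (\<forall>t\<in>set ts. g t \<in> space (idx_class t)) \<and>
      v = foldr (\<lambda>t. vadd (g t)) ts vzero" if "v \<in> space UNIV" for v
    using class_spaces_span[OF that] by metis
qed (use class_spaces_independent in blast)

end

lemma ext_zero_image_fs_carrier: "ext_zero z J ` fs_carrier z J = fs_carrier z J"
proof -
  have "ext_zero z J u = u" if "u \<in> fs_carrier z J" for u
    using that by (auto simp: ext_zero_def fs_carrier_def)
  then show ?thesis by simp
qed

theorem mainTheorem8:
  fixes add mul :: "'a \<Rightarrow> 'a \<Rightarrow> 'a" and zero one :: 'a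
    and \<sigma> \<rho> :: "'i \<Rightarrow> 'a \<Rightarrow> 'a" and T :: "'i set"
  assumes "near_field add mul zero one"
    and "\<forall>i. mult_aut mul one (\<sigma> i)"
    and "\<forall>i. mult_aut mul one (\<rho> i)"
    and "full_reps (idx_rel add mul zero one \<sigma> \<rho>) T"
  shows "regular_decomposition_family mul zero one
           (fs_carrier zero UNIV) (fs_add add zero \<sigma> UNIV) (fs_smul mul zero \<rho> UNIV) (\<lambda>i. zero)
           T (\<lambda>t. ext_zero zero {i. idx_rel add mul zero one \<sigma> \<rho> i t} `
                   fs_carrier zero {i. idx_rel add mul zero one \<sigma> \<rho> i t})"
proof -
  interpret class_decomposition add mul zero one \<sigma> \<rho> T
    using assms by unfold_locales blast+
  show ?thesis
    unfolding regular_decomposition_family_def ext_zero_image_fs_carrier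
    using internal_direct_sum_class_spaces max_regular_subspace_class_space by blast
qed

end
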